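(* Let $\alpha,\beta$ be sets, $z\in\beta$, $\mathit{seq}:\beta\times\alpha\to\beta$, $\mathit{comb}:\beta\times\beta\to\beta$. Calls $\mathrm{treeAggregate}(z,\mathit{seq},\mathit{comb},\mathit{rdd})$ have deterministic outcomes if and only if calls $\mathrm{aggregate}(z,\mathit{seq},\mathit{comb},\mathit{rdd})$ have deterministic outcomes.
   Context: Lists are finite; $\mathbin{+\!\!+}$ is concatenation. $\mathrm{foldl}(f,b,[\,])=b$, $\mathrm{foldl}(f,b,[x_1,\dots,x_n])=f(\cdots f(f(b,x_1),x_2)\cdots,x_n)$. An RDD is a list of lists. A partitioning is a function $P$ sending each list $L$ over $\alpha$ to a nonempty RDD obtained by splitting $L$ into consecutive (possibly empty) pieces $p_1,\dots,p_n$ ($n\ge1$) with $p_1\mathbin{+\!\!+}\cdots\mathbin{+\!\!+}p_n=L$ and then arbitrarily permuting $[p_1,\dots,p_n]$. $\mathrm{aggregate}_{\mathrm{det}}(z,\mathit{seq},\mathit{comb},[q_1,\dots,q_m])=\mathrm{foldl}(\mathit{comb},z,[\mathrm{foldl}(\mathit{seq},z,q_1),\dots,\mathrm{foldl}(\mathit{seq},z,q_m)])$; calls to $\mathrm{aggregate}$ have deterministic outcomes if $\mathrm{aggregate}_{\mathrm{det}}(z,\mathit{seq},\mathit{comb},P(L))=\mathrm{foldl}(\mathit{seq},z,L)$ for all $L$ and all partitionings $P$. An instantiation of $\mathrm{apply}$ is any deterministic procedure which, given $\mathit{comb}$ and a nonempty list $[r_1,\dots,r_m]$, returns the single value obtained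 by repeatedly choosing two adjacent elements $l',r'$ of the current list and replacing them by $\mathit{comb}(l',r')$ until one element remains (equivalently, evaluating $\mathit{comb}$ along some binary tree whose leaves are $r_1,\dots,r_m$ in order). $\mathrm{treeAggregate}_{\mathrm{bt}}(\mathrm{apply},z,\mathit{seq},\mathit{comb},[q_1,\dots,q_m])=\mathrm{apply}(\mathit{comb},[\mathrm{foldl}(\mathit{seq},z,q_1),\dots,\mathrm{foldl}(\mathit{seq},z,q_m)])$. Calls $\mathrm{treeAggregate}(z,\mathit{seq},\mathit{comb},\mathit{rdd})$ have deterministic outcomes if $\mathrm{treeAggregate}_{\mathrm{bt}}(\mathrm{apply},z,\mathit{seq},\mathit{comb},P(L))=\mathrm{foldl}(\mathit{seq},z,L)$ for all lists $L$, partitionings $P$, and instantiations $\mathrm{apply}$. *)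

theory Defs
  imports Main "HOL-Library.Multiset"
begin

type_synonym 'a rdd = "'a list list"

definition is_partition_of :: "'a list \<Rightarrow> 'a rdd \<Rightarrow> bool" where
  "is_partition_of L R \<longleftrightarrow>
     (\<exists>ps. ps \<noteq> [] \<and> concat ps = L \<and> mset R = mset ps)"

definition partitioning :: "('a list \<Rightarrow> 'a rdd) \<Rightarrow> bool" where
  "partitioning P \<longleftrightarrow> (\<forall>L. is_partition_of L (P L))"

definition aggregate_det ::
  "'b \<Rightarrow> ('b \<Rightarrow> 'a \<Rightarrow> 'b) \<Rightarrow> ('b \<Rightarrow> 'b \<Rightarrow> 'b) \<Rightarrow> 'a rdd \<Rightarrow> 'b" where
  "aggregate_det z seq comb qs = foldl comb z (map (foldl seq z) qs)"

inductive tree_eval :: "('b \<Rightarrow> 'b \<Rightarrow> 'b) \<Rightarrow> 'b list \<Rightarrow> 'b \<Rightarrow> bool"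
  for comb where
  leaf: "tree_eval comb [x] x"
| node: "tree_eval comb xs a \<Longrightarrow> tree_eval comb ys b \<Longrightarrow>
         tree_eval comb (xs @ ys) (comb a b)"

definition apply_inst :: "(('b \<Rightarrow> 'b \<Rightarrow> 'b) \<Rightarrow> 'b list \<Rightarrow> 'b) \<Rightarrow> bool" where
  "apply_inst ap \<longleftrightarrow> (\<forall>comb rs. rs \<noteq> [] \<longrightarrow> tree_eval comb rs (ap comb rs))"

definition treeAggregate_bt ::
  "(('b \<Rightarrow> 'b \<Rightarrow> 'b) \<Rightarrow> 'b list \<Rightarrow> 'b) \<Rightarrow> 'b \<Rightarrow> ('b \<Rightarrow> 'a \<Rightarrow> 'b) \<Rightarrow>
   ('b \<Rightarrow> 'b \<Rightarrow> 'b) \<Rightarrow> 'a rdd \<Rightarrow> 'b" where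
  "treeAggregate_bt ap z seq comb qs = ap comb (map (foldl seq z) qs)"

definition aggregate_deterministic ::
  "'b \<Rightarrow> ('b \<Rightarrow> 'a \<Rightarrow> 'b) \<Rightarrow> ('b \<Rightarrow> 'b \<Rightarrow> 'b) \<Rightarrow> bool" where
  "aggregate_deterministic z seq comb \<longleftrightarrow>
     (\<forall>(P :: 'a list \<Rightarrow> 'a rdd) L. partitioning P \<longrightarrow>
        aggregate_det z seq comb (P L) = foldl seq z L)"

definition treeAggregate_deterministic ::
  "'b \<Rightarrow> ('b \<Rightarrow> 'a \<Rightarrow> 'b) \<Rightarrow> ('b \<Rightarrow> 'b \<Rightarrow> 'b) \<Rightarrow> bool" where
  "treeAggregate_deterministic z seq comb \<longleftrightarrow>
     (\<forall>(P :: 'a list \<Rightarrow> 'a rdd) L ap. partitioning P \<longrightarrow> apply_inst ap \<longrightarrow>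
        treeAggregate_bt ap z seq comb (P L) = foldl seq z L)"

end

theory Submission
  imports Defs
begin

text \<open>Write \<open>f = foldl seq z\<close>. Both kinds of calls are deterministic exactly when
  \<open>comb (f xs) (f ys) = f (xs @ ys)\<close> and \<open>f\<close> is invariant under permuting the pieces of a
  partition. Sufficiency: the combination of the partial results along any bracketing
  (a tree for \<open>treeAggregate\<close>, a left fold starting from \<open>z = f []\<close> for \<open>aggregate\<close>) then
  collapses to \<open>f\<close> of the concatenated pieces. Necessity: a single partitioning may
  realise any one partition, and the partitions \<open>[xs]\<close> and \<open>[xs, ys]\<close> force the
  homomorphism law (for \<open>aggregate\<close>, \<open>[xs]\<close> first gives \<open>comb z (f xs) = f xs\<close>).\<close>

lemma tree_eval_map_hom:
  assumes hom: "\<And>xs ys. comb (f xs) (f ys) = f (xs @ ys)"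
  shows "tree_eval comb rs v \<Longrightarrow> rs = map f qs \<Longrightarrow> v = f (concat qs)"
proof (induction rs v arbitrary: qs rule: tree_eval.induct)
  case (leaf x)
  then show ?case by (cases qs) auto
next
  case (node xs a ys b)
  from node.prems obtain qs1 qs2 where "qs = qs1 @ qs2" "xs = map f qs1" "ys = map f qs2"
    using map_eq_append_conv[of f qs xs ys] by auto
  with node.IH show ?case by (simp add: hom)
qed

lemma foldl_map_hom:
  assumes hom: "\<And>xs ys. comb (f xs) (f ys) = f (xs @ ys)"
  shows "foldl comb (f []) (map f qs) = f (concat qs)"
  by (induction qs rule: rev_induct) (simp_all add: hom)

definition foldl_apply :: "('b \<Rightarrow> 'b \<Rightarrow> 'b) \<Rightarrow> 'b list \<Rightarrow> 'b" where
  "foldl_apply comb rs = foldl comb (hd rs) (tl rs)"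

lemma tree_eval_foldl_apply: "rs \<noteq> [] \<Longrightarrow> tree_eval comb rs (foldl_apply comb rs)"
proof (induction rs rule: rev_induct)
  case Nil
  then show ?case by simp
next
  case (snoc y xs)
  show ?case
  proof (cases "xs = []")
    case True
    then show ?thesis by (simp add: foldl_apply_def tree_eval.leaf)
  next
    case False
    have "tree_eval comb (xs @ [y]) (comb (foldl_apply comb xs) y)"
      using snoc.IH[OF False] tree_eval.leaf by (rule tree_eval.node)
    with False show ?thesis by (cases xs) (simp_all add: foldl_apply_def)
  qed
qed

lemma apply_inst_foldl_apply: "apply_inst foldl_apply"
  unfolding apply_inst_def using tree_eval_foldl_apply by blast

lemma is_partition_of_singleton: "is_partition_of xs [xs]"
  unfolding is_partition_of_def by (rule exI[of _ "[xs]"]) simp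

lemma is_partition_of_append: "is_partition_of (xs @ ys) [xs, ys]"
  unfolding is_partition_of_def by (rule exI[of _ "[xs, ys]"]) simp

lemma is_partition_of_nonempty: "is_partition_of L R \<Longrightarrow> R \<noteq> []"
  unfolding is_partition_of_def by auto

lemma partitioning_singletons_upd:
  "is_partition_of L R \<Longrightarrow> partitioning ((\<lambda>xs. [xs])(L := R))"
  unfolding partitioning_def by (simp add: is_partition_of_singleton)

lemma aggregate_deterministic_iff_partitions:
  "aggregate_deterministic z seq comb \<longleftrightarrow>
     (\<forall>L R. is_partition_of L R \<longrightarrow> aggregate_det z seq comb R = foldl seq z L)"
  unfolding aggregate_deterministic_def partitioning_def
  using partitioning_singletons_upd[unfolded partitioning_def] by (metis fun_upd_same)

lemma treeAggregate_deterministic_iff_partitions: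
  "treeAggregate_deterministic z seq comb \<longleftrightarrow>
     (\<forall>L R ap. is_partition_of L R \<longrightarrow> apply_inst ap \<longrightarrow>
        treeAggregate_bt ap z seq comb R = foldl seq z L)"
  unfolding treeAggregate_deterministic_def partitioning_def
  using partitioning_singletons_upd[unfolded partitioning_def] by (metis fun_upd_same)

definition fold_compatible :: "'b \<Rightarrow> ('b \<Rightarrow> 'a \<Rightarrow> 'b) \<Rightarrow> ('b \<Rightarrow> 'b \<Rightarrow> 'b) \<Rightarrow> bool" where
  "fold_compatible z seq comb \<longleftrightarrow>
     (\<forall>xs ys. comb (foldl seq z xs) (foldl seq z ys) = foldl seq z (xs @ ys)) \<and>
     (\<forall>L R. is_partition_of L R \<longrightarrow> foldl seq z (concat R) = foldl seq z L)"

lemma aggregate_deterministic_iff_fold_compatible: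
  "aggregate_deterministic z seq comb \<longleftrightarrow> fold_compatible z seq comb"
proof -
  let ?f = "foldl seq z"
  have "fold_compatible z seq comb"
    if det: "\<And>L R. is_partition_of L R \<Longrightarrow> foldl comb z (map ?f R) = ?f L"
  proof -
    have left_unit: "comb z (?f xs) = ?f xs" for xs
      using det[OF is_partition_of_singleton] by simp
    have hom: "comb (?f xs) (?f ys) = ?f (xs @ ys)" for xs ys
      using det[OF is_partition_of_append] by (simp add: left_unit)
    have "?f (concat R) = ?f L" if "is_partition_of L R" for L R
      using det[OF that] foldl_map_hom[of comb ?f, OF hom] by simp
    with hom show ?thesis unfolding fold_compatible_def by blast
  qed
  moreover have "foldl comb z (map ?f R) = ?f L"
    if "fold_compatible z seq comb" "is_partition_of L R" for L R
    using that foldl_map_hom[of comb ?f] unfolding fold_compatible_def by simp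
  ultimately show ?thesis
    unfolding aggregate_deterministic_iff_partitions aggregate_det_def by blast
qed

lemma treeAggregate_deterministic_iff_fold_compatible:
  "treeAggregate_deterministic z seq comb \<longleftrightarrow> fold_compatible z seq comb"
proof -
  let ?f = "foldl seq z"
  have tree_collapse: "ap comb (map ?f R) = ?f (concat R)"
    if hom: "\<And>xs ys. comb (?f xs) (?f ys) = ?f (xs @ ys)"
      and "apply_inst ap" "is_partition_of L R" for ap L R
  proof -
    have "tree_eval comb (map ?f R) (ap comb (map ?f R))"
      using that(2,3) is_partition_of_nonempty unfolding apply_inst_def by blast
    then show ?thesis using tree_eval_map_hom[of comb ?f, OF hom] by blast
  qed
  have "fold_compatible z seq comb"
    if det: "\<And>L R. is_partition_of L R \<Longrightarrow> foldl_apply comb (map ?f R) = ?f L"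
  proof -
    have hom: "comb (?f xs) (?f ys) = ?f (xs @ ys)" for xs ys
      using det[OF is_partition_of_append] by (simp add: foldl_apply_def)
    have "?f (concat R) = ?f L" if "is_partition_of L R" for L R
      using det[OF that] tree_collapse[OF hom apply_inst_foldl_apply that] by simp
    with hom show ?thesis unfolding fold_compatible_def by blast
  qed
  moreover have "ap comb (map ?f R) = ?f L"
    if "fold_compatible z seq comb" "apply_inst ap" "is_partition_of L R" for ap L R
    using that tree_collapse unfolding fold_compatible_def by metis
  ultimately show ?thesis
    unfolding treeAggregate_deterministic_iff_partitions treeAggregate_bt_def
    using apply_inst_foldl_apply by blast
qed

theorem proposition1:
  fixes z :: 'b and seq :: "'b \<Rightarrow> 'a \<Rightarrow> 'b" and comb :: "'b \<Rightarrow> 'b \<Rightarrow> 'b"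
  shows "treeAggregate_deterministic z seq comb \<longleftrightarrow> aggregate_deterministic z seq comb"
  by (simp add: treeAggregate_deterministic_iff_fold_compatible
      aggregate_deterministic_iff_fold_compatible)

end
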